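(* Let $S$ be an idempotent semiring and define the relation $\sigma^*$ on $S$ by: $a\,\sigma^*\, b$ if and only if there exists $x\in S$ such that $axbxa=axbxa+a+axbxa$ and $bxaxb=bxaxb+b+bxaxb$. Then $\sigma^*$ is the least distributive lattice congruence on $S$.
   Context: An idempotent semiring is an algebra $(S,+,\cdot)$ with two binary operations such that $(S,+)$ and $(S,\cdot)$ are bands (associative, with $x+x=x$ and $xx=x$), and both distributive laws $x(y+z)=xy+xz$ and $(x+y)z=xz+yz$ hold; addition is not assumed commutative. A distributive lattice congruence on $S$ is a congruence $\rho$ such that $S/\rho$ is a distributive lattice, i.e. $S/\rho$ satisfies $x+y\approx y+x$, $xy\approx yx$ and $x+xy\approx x$. *)

theory Defs
  imports Main
begin

text \<open>An idempotent semiring on the whole type 'a, with addition pl and multiplication ml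
  (addition not assumed commutative).\<close>
definition idem_semiring :: "('a \<Rightarrow> 'a \<Rightarrow> 'a) \<Rightarrow> ('a \<Rightarrow> 'a \<Rightarrow> 'a) \<Rightarrow> bool" where
  "idem_semiring pl ml \<longleftrightarrow>
     (\<forall>x y z. pl (pl x y) z = pl x (pl y z)) \<and> (\<forall>x. pl x x = x) \<and>
     (\<forall>x y z. ml (ml x y) z = ml x (ml y z)) \<and> (\<forall>x. ml x x = x) \<and>
     (\<forall>x y z. ml x (pl y z) = pl (ml x y) (ml x z)) \<and>
     (\<forall>x y z. ml (pl x y) z = pl (ml x z) (ml y z))"

definition semiring_congruence :: "('a \<Rightarrow> 'a \<Rightarrow> 'a) \<Rightarrow> ('a \<Rightarrow> 'a \<Rightarrow> 'a) \<Rightarrow> 'a rel \<Rightarrow> bool" where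
  "semiring_congruence pl ml \<rho> \<longleftrightarrow> equiv UNIV \<rho> \<and>
     (\<forall>a b c d. (a, b) \<in> \<rho> \<and> (c, d) \<in> \<rho> \<longrightarrow> (pl a c, pl b d) \<in> \<rho> \<and> (ml a c, ml b d) \<in> \<rho>)"

definition dl_congruence :: "('a \<Rightarrow> 'a \<Rightarrow> 'a) \<Rightarrow> ('a \<Rightarrow> 'a \<Rightarrow> 'a) \<Rightarrow> 'a rel \<Rightarrow> bool" where
  "dl_congruence pl ml \<rho> \<longleftrightarrow> semiring_congruence pl ml \<rho> \<and>
     (\<forall>x y. (pl x y, pl y x) \<in> \<rho>) \<and> (\<forall>x y. (ml x y, ml y x) \<in> \<rho>) \<and>
     (\<forall>x y. (pl x (ml x y), x) \<in> \<rho>)"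

definition sigma_star :: "('a \<Rightarrow> 'a \<Rightarrow> 'a) \<Rightarrow> ('a \<Rightarrow> 'a \<Rightarrow> 'a) \<Rightarrow> 'a rel" where
  "sigma_star pl ml = {(a, b). \<exists>x.
     (let axbxa = ml (ml (ml (ml a x) b) x) a in axbxa = pl (pl axbxa a) axbxa) \<and>
     (let bxaxb = ml (ml (ml (ml b x) a) x) b in bxaxb = pl (pl bxaxb b) bxaxb)}"

end

theory Submission
  imports Defs
begin

text \<open>
  Write \<open>a \<preceq> b\<close> for \<open>b + a + b = b\<close>, the natural preorder of the additive band; then
  \<open>a \<sigma>* b\<close> says \<open>a \<preceq> axbxa\<close> and \<open>b \<preceq> bxaxb\<close>, and the whole argument runs with
  \<open>\<preceq>\<close> inside \<open>S\<close>, without passing to a quotient. Mutually \<open>\<preceq>\<close>-related elements are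
  \<open>\<sigma>*\<close>-related (witness \<open>x = a\<close>), so \<open>a + b \<sigma>* b + a\<close>; commutativity of multiplication
  and absorption have explicit witnesses. Hence compatibility only has to be checked on one
  side, and for multiplication it rests on the inequality \<open>xyzx \<preceq> xyxzx\<close>. Conversely, in a
  distributive lattice quotient \<open>a \<preceq> aw\<close> forces \<open>aw \<equiv> a\<close> and \<open>axbxa \<equiv> xab\<close>, so
  \<open>a \<equiv> xab \<equiv> xba \<equiv> b\<close>.
\<close>

locale idempotent_semiring =
  fixes add :: "'a \<Rightarrow> 'a \<Rightarrow> 'a" (infixl "\<oplus>" 65)
    and mult :: "'a \<Rightarrow> 'a \<Rightarrow> 'a" (infixl "\<odot>" 70)
  assumes add_assoc: "(a \<oplus> b) \<oplus> c = a \<oplus> (b \<oplus> c)"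
    and add_idem [simp]: "a \<oplus> a = a"
    and mult_assoc: "(a \<odot> b) \<odot> c = a \<odot> (b \<odot> c)"
    and mult_idem [simp]: "a \<odot> a = a"
    and distrib_left: "a \<odot> (b \<oplus> c) = a \<odot> b \<oplus> a \<odot> c"
    and distrib_right: "(a \<oplus> b) \<odot> c = a \<odot> c \<oplus> b \<odot> c"

lemma idempotent_semiringI: "idem_semiring pl ml \<Longrightarrow> idempotent_semiring pl ml"
  unfolding idem_semiring_def idempotent_semiring_def by blast

lemma dl_congruenceD:
  assumes "dl_congruence pl ml \<rho>"
  shows "(a, a) \<in> \<rho>"
    and "(a, b) \<in> \<rho> \<Longrightarrow> (b, a) \<in> \<rho>"
    and "(a, b) \<in> \<rho> \<Longrightarrow> (b, c) \<in> \<rho> \<Longrightarrow> (a, c) \<in> \<rho>"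
    and "(a, b) \<in> \<rho> \<Longrightarrow> (c, d) \<in> \<rho> \<Longrightarrow> (pl a c, pl b d) \<in> \<rho>"
    and "(a, b) \<in> \<rho> \<Longrightarrow> (c, d) \<in> \<rho> \<Longrightarrow> (ml a c, ml b d) \<in> \<rho>"
    and "(pl a b, pl b a) \<in> \<rho>"
    and "(ml a b, ml b a) \<in> \<rho>"
    and "(pl a (ml a b), a) \<in> \<rho>"
proof -
  from assms have "equiv UNIV \<rho>"
    by (simp add: dl_congruence_def semiring_congruence_def)
  then show "(a, a) \<in> \<rho>" and "(a, b) \<in> \<rho> \<Longrightarrow> (b, a) \<in> \<rho>"
    and "(a, b) \<in> \<rho> \<Longrightarrow> (b, c) \<in> \<rho> \<Longrightarrow> (a, c) \<in> \<rho>"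
    by (auto elim!: equivE dest: refl_onD symD transD)
  from assms show "(a, b) \<in> \<rho> \<Longrightarrow> (c, d) \<in> \<rho> \<Longrightarrow> (pl a c, pl b d) \<in> \<rho>"
    and "(a, b) \<in> \<rho> \<Longrightarrow> (c, d) \<in> \<rho> \<Longrightarrow> (ml a c, ml b d) \<in> \<rho>"
    and "(pl a b, pl b a) \<in> \<rho>" and "(ml a b, ml b a) \<in> \<rho>" and "(pl a (ml a b), a) \<in> \<rho>"
    by (simp_all add: dl_congruence_def semiring_congruence_def)
qed

context idempotent_semiring
begin

lemma mult_idem_left: "a \<odot> (a \<odot> b) = a \<odot> b"
  by (metis mult_assoc mult_idem)

lemma mult_square: "a \<odot> (b \<odot> (a \<odot> b)) = a \<odot> b"
  by (metis mult_assoc mult_idem)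

lemma mult_square_left: "a \<odot> (b \<odot> (a \<odot> (b \<odot> c))) = a \<odot> (b \<odot> c)"
  by (metis mult_assoc mult_idem)

lemmas band_simps = mult_assoc mult_idem_left mult_square mult_square_left

definition leq :: "'a \<Rightarrow> 'a \<Rightarrow> bool" (infix "\<preceq>" 50)
  where "a \<preceq> b \<longleftrightarrow> b \<oplus> a \<oplus> b = b"

lemma leq_refl [simp]: "a \<preceq> a"
  by (simp add: leq_def)

lemma leq_trans [trans]: "a \<preceq> b \<Longrightarrow> b \<preceq> c \<Longrightarrow> a \<preceq> c"
  unfolding leq_def by (metis add_assoc add_idem)

lemma leq_add_left: "a \<preceq> a \<oplus> b"
  unfolding leq_def by (metis add_assoc add_idem)

lemma leq_add_right: "b \<preceq> a \<oplus> b"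
  unfolding leq_def by (metis add_assoc add_idem)

lemma add_leq: "a \<preceq> c \<Longrightarrow> b \<preceq> c \<Longrightarrow> a \<oplus> b \<preceq> c"
  unfolding leq_def by (metis add_assoc add_idem)

lemma mult_left_mono: "a \<preceq> b \<Longrightarrow> c \<odot> a \<preceq> c \<odot> b"
  unfolding leq_def by (metis distrib_left)

lemma mult_right_mono: "a \<preceq> b \<Longrightarrow> a \<odot> c \<preceq> b \<odot> c"
  unfolding leq_def by (metis distrib_right)

lemma mult_mono: "a \<preceq> b \<Longrightarrow> c \<preceq> d \<Longrightarrow> a \<odot> c \<preceq> b \<odot> d"
  using leq_trans mult_left_mono mult_right_mono by blast

lemma leq_sandwich:
  assumes "a \<preceq> b"
  shows "a \<preceq> a \<odot> b \<odot> a"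
proof -
  have "a \<odot> a \<odot> a \<preceq> a \<odot> b \<odot> a"
    by (intro mult_mono leq_refl assms)
  then show ?thesis by simp
qed

lemma mult_leq_add: "a \<odot> b \<preceq> a \<oplus> b"
proof -
  have "a \<odot> b \<preceq> a \<odot> a \<oplus> b \<odot> a \<oplus> (a \<odot> b \<oplus> b \<odot> b)"
    using leq_add_left leq_add_right leq_trans by blast
  also have "\<dots> = (a \<oplus> b) \<odot> (a \<oplus> b)"
    by (simp only: distrib_left distrib_right add_assoc)
  finally show ?thesis by simp
qed

lemma leq_insert_factor: "x \<odot> y \<odot> z \<odot> x \<preceq> x \<odot> y \<odot> x \<odot> z \<odot> x"
proof -
  have "x \<odot> y \<odot> z \<odot> x \<preceq> x \<odot> (y \<oplus> z) \<odot> x"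
    using mult_left_mono mult_right_mono mult_leq_add by (metis mult_assoc)
  then have "x \<odot> y \<odot> (x \<odot> y \<odot> z \<odot> x) \<odot> (z \<odot> x) \<preceq> x \<odot> y \<odot> (x \<odot> (y \<oplus> z) \<odot> x) \<odot> (z \<odot> x)"
    by (rule mult_right_mono[OF mult_left_mono])
  moreover have "x \<odot> y \<odot> (x \<odot> y \<odot> z \<odot> x) \<odot> (z \<odot> x) = x \<odot> y \<odot> z \<odot> x"
    by (simp add: band_simps)
  moreover have "x \<odot> y \<odot> (x \<odot> (y \<oplus> z) \<odot> x) \<odot> (z \<odot> x) = x \<odot> y \<odot> x \<odot> z \<odot> x"
    by (simp add: distrib_left distrib_right band_simps)
  ultimately show ?thesis by simp
qed

abbreviation sigma :: "'a rel"
  where "sigma \<equiv> sigma_star (\<oplus>) (\<odot>)"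

lemma sigma_iff:
  "(a, b) \<in> sigma \<longleftrightarrow> (\<exists>x. a \<preceq> a \<odot> x \<odot> b \<odot> x \<odot> a \<and> b \<preceq> b \<odot> x \<odot> a \<odot> x \<odot> b)"
  by (simp add: sigma_star_def leq_def Let_def eq_commute)

lemma sigmaI: "a \<preceq> a \<odot> x \<odot> b \<odot> x \<odot> a \<Longrightarrow> b \<preceq> b \<odot> x \<odot> a \<odot> x \<odot> b \<Longrightarrow> (a, b) \<in> sigma"
  by (auto simp: sigma_iff)

lemma sigma_sym: "(a, b) \<in> sigma \<Longrightarrow> (b, a) \<in> sigma"
  by (auto simp: sigma_iff)

lemma sigma_if_leq_leq:
  assumes "a \<preceq> b" and "b \<preceq> a"
  shows "(a, b) \<in> sigma"
proof (rule sigmaI)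
  have "a \<odot> a \<odot> b \<odot> a \<odot> a = a \<odot> b \<odot> a" and "b \<odot> a \<odot> a \<odot> a \<odot> b = b \<odot> a \<odot> b"
    by (simp_all add: band_simps)
  then show "a \<preceq> a \<odot> a \<odot> b \<odot> a \<odot> a" and "b \<preceq> b \<odot> a \<odot> a \<odot> a \<odot> b"
    using assms leq_sandwich by simp_all
qed

lemma sigma_refl: "(a, a) \<in> sigma"
  by (simp add: sigma_if_leq_leq)

lemma sigma_add_comm: "(a \<oplus> b, b \<oplus> a) \<in> sigma"
  by (intro sigma_if_leq_leq add_leq leq_add_left leq_add_right)

lemma sigma_mult_comm: "(a \<odot> b, b \<odot> a) \<in> sigma"
proof (rule sigmaI)
  show "a \<odot> b \<preceq> a \<odot> b \<odot> (a \<odot> b) \<odot> (b \<odot> a) \<odot> (a \<odot> b) \<odot> (a \<odot> b)"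
    by (simp add: band_simps)
  show "b \<odot> a \<preceq> b \<odot> a \<odot> (a \<odot> b) \<odot> (a \<odot> b) \<odot> (a \<odot> b) \<odot> (b \<odot> a)"
    by (simp add: band_simps)
qed

lemma sigma_add_absorb: "(a \<oplus> a \<odot> b, a) \<in> sigma"
proof (rule sigmaI)
  let ?p = "a \<oplus> a \<odot> b"
  have "?p \<odot> a \<odot> a \<odot> a \<odot> ?p = a \<oplus> (a \<odot> b \<odot> a \<oplus> a \<odot> b)"
    by (simp add: distrib_left distrib_right band_simps add_assoc)
  moreover have "?p \<preceq> a \<oplus> (a \<odot> b \<odot> a \<oplus> a \<odot> b)"
    by (meson add_leq leq_add_left leq_add_right leq_trans)
  ultimately show "?p \<preceq> ?p \<odot> a \<odot> a \<odot> a \<odot> ?p"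
    by (simp add: add_assoc)
  have "a \<odot> a \<odot> ?p \<odot> a \<odot> a = a \<oplus> a \<odot> b \<odot> a"
    by (simp add: distrib_left distrib_right band_simps)
  then show "a \<preceq> a \<odot> a \<odot> ?p \<odot> a \<odot> a"
    by (simp add: leq_add_left)
qed

lemma sigma_witness_trans:
  assumes "a \<preceq> a \<odot> x \<odot> b \<odot> x \<odot> a" and "b \<preceq> b \<odot> y \<odot> c \<odot> y \<odot> b"
    and "x \<odot> b \<odot> y \<preceq> z" and "y \<odot> b \<odot> x \<preceq> z"
  shows "a \<preceq> a \<odot> z \<odot> c \<odot> z \<odot> a"
proof -
  have "a \<odot> x \<odot> b \<odot> x \<odot> a \<preceq> a \<odot> x \<odot> (b \<odot> y \<odot> c \<odot> y \<odot> b) \<odot> x \<odot> a"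
    by (intro mult_mono leq_refl assms(2))
  also have "\<dots> = a \<odot> (x \<odot> b \<odot> y) \<odot> c \<odot> (y \<odot> b \<odot> x) \<odot> a"
    by (simp add: mult_assoc)
  also have "\<dots> \<preceq> a \<odot> z \<odot> c \<odot> z \<odot> a"
    by (intro mult_mono leq_refl assms(3,4))
  finally show ?thesis
    using assms(1) leq_trans by blast
qed

lemma sigma_witness_add_right:
  assumes "a \<preceq> a \<odot> x \<odot> b \<odot> x \<odot> a"
  shows "a \<oplus> c \<preceq> (a \<oplus> c) \<odot> (x \<oplus> c) \<odot> (b \<oplus> c) \<odot> (x \<oplus> c) \<odot> (a \<oplus> c)"
proof (rule add_leq)
  have "a \<odot> x \<odot> b \<odot> x \<odot> a \<preceq> (a \<oplus> c) \<odot> (x \<oplus> c) \<odot> (b \<oplus> c) \<odot> (x \<oplus> c) \<odot> (a \<oplus> c)"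
    by (intro mult_mono leq_add_left)
  then show "a \<preceq> (a \<oplus> c) \<odot> (x \<oplus> c) \<odot> (b \<oplus> c) \<odot> (x \<oplus> c) \<odot> (a \<oplus> c)"
    using assms leq_trans by blast
  have "c \<odot> c \<odot> c \<odot> c \<odot> c \<preceq> (a \<oplus> c) \<odot> (x \<oplus> c) \<odot> (b \<oplus> c) \<odot> (x \<oplus> c) \<odot> (a \<oplus> c)"
    by (intro mult_mono leq_add_right)
  then show "c \<preceq> (a \<oplus> c) \<odot> (x \<oplus> c) \<odot> (b \<oplus> c) \<odot> (x \<oplus> c) \<odot> (a \<oplus> c)"
    by simp
qed

lemma sigma_witness_mult_right:
  assumes "a \<preceq> a \<odot> x \<odot> b \<odot> x \<odot> a"
  shows "a \<odot> c \<preceq> (a \<odot> c) \<odot> x \<odot> (b \<odot> c) \<odot> x \<odot> (a \<odot> c)"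
proof -
  have "a \<odot> c \<preceq> a \<odot> x \<odot> b \<odot> x \<odot> a \<odot> c"
    using assms by (rule mult_right_mono)
  then have "a \<odot> c \<odot> (a \<odot> c) \<preceq> a \<odot> c \<odot> (a \<odot> x \<odot> b \<odot> x \<odot> a \<odot> c)"
    by (rule mult_left_mono)
  also have "\<dots> = a \<odot> (c \<odot> a \<odot> (x \<odot> b \<odot> x \<odot> a) \<odot> c)"
    by (simp add: mult_assoc)
  also have "\<dots> \<preceq> a \<odot> (c \<odot> a \<odot> c \<odot> (x \<odot> b \<odot> x \<odot> a) \<odot> c)"
    by (intro mult_left_mono leq_insert_factor)
  also have "\<dots> = a \<odot> (c \<odot> (x \<odot> b) \<odot> (x \<odot> a) \<odot> c)"
    by (simp add: band_simps)
  also have "\<dots> \<preceq> a \<odot> (c \<odot> (x \<odot> b) \<odot> c \<odot> (x \<odot> a) \<odot> c)"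
    by (intro mult_left_mono leq_insert_factor)
  also have "\<dots> = (a \<odot> c) \<odot> x \<odot> (b \<odot> c) \<odot> x \<odot> (a \<odot> c)"
    by (simp add: mult_assoc)
  finally show ?thesis
    by simp
qed

lemma sigma_trans [trans]:
  assumes "(a, b) \<in> sigma" and "(b, c) \<in> sigma"
  shows "(a, c) \<in> sigma"
proof -
  obtain x where ab: "a \<preceq> a \<odot> x \<odot> b \<odot> x \<odot> a" and ba: "b \<preceq> b \<odot> x \<odot> a \<odot> x \<odot> b"
    using assms(1) by (auto simp: sigma_iff)
  obtain y where bc: "b \<preceq> b \<odot> y \<odot> c \<odot> y \<odot> b" and cb: "c \<preceq> c \<odot> y \<odot> b \<odot> y \<odot> c"
    using assms(2) by (auto simp: sigma_iff)
  define z where "z = x \<odot> b \<odot> y \<oplus> y \<odot> b \<odot> x"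
  have "x \<odot> b \<odot> y \<preceq> z" and "y \<odot> b \<odot> x \<preceq> z"
    by (simp_all add: z_def leq_add_left leq_add_right)
  then show ?thesis
    using sigma_witness_trans[OF ab bc] sigma_witness_trans[OF cb ba] by (intro sigmaI)
qed

lemma sigma_add_right:
  assumes "(a, b) \<in> sigma"
  shows "(a \<oplus> c, b \<oplus> c) \<in> sigma"
proof -
  obtain x where "a \<preceq> a \<odot> x \<odot> b \<odot> x \<odot> a" "b \<preceq> b \<odot> x \<odot> a \<odot> x \<odot> b"
    using assms by (auto simp: sigma_iff)
  then show ?thesis
    by (intro sigmaI[where x = "x \<oplus> c"] sigma_witness_add_right)
qed

lemma sigma_mult_right:
  assumes "(a, b) \<in> sigma"
  shows "(a \<odot> c, b \<odot> c) \<in> sigma"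
proof -
  obtain x where "a \<preceq> a \<odot> x \<odot> b \<odot> x \<odot> a" "b \<preceq> b \<odot> x \<odot> a \<odot> x \<odot> b"
    using assms by (auto simp: sigma_iff)
  then show ?thesis
    by (intro sigmaI sigma_witness_mult_right)
qed

lemma sigma_equiv: "equiv UNIV sigma"
proof (rule equivI)
  show "sigma \<subseteq> UNIV \<times> UNIV"
    by simp
  show "refl sigma"
    by (rule refl_onI) (rule sigma_refl)
  show "sym sigma"
    by (rule symI) (rule sigma_sym)
  show "trans sigma"
    by (rule transI) (rule sigma_trans)
qed

lemma sigma_add:
  assumes "(a, b) \<in> sigma" and "(c, d) \<in> sigma"
  shows "(a \<oplus> c, b \<oplus> d) \<in> sigma"
proof -
  have "(a \<oplus> c, b \<oplus> c) \<in> sigma"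
    using assms(1) by (rule sigma_add_right)
  also have "(b \<oplus> c, c \<oplus> b) \<in> sigma"
    by (rule sigma_add_comm)
  also have "(c \<oplus> b, d \<oplus> b) \<in> sigma"
    using assms(2) by (rule sigma_add_right)
  also have "(d \<oplus> b, b \<oplus> d) \<in> sigma"
    by (rule sigma_add_comm)
  finally show ?thesis .
qed

lemma sigma_mult:
  assumes "(a, b) \<in> sigma" and "(c, d) \<in> sigma"
  shows "(a \<odot> c, b \<odot> d) \<in> sigma"
proof -
  have "(a \<odot> c, b \<odot> c) \<in> sigma"
    using assms(1) by (rule sigma_mult_right)
  also have "(b \<odot> c, c \<odot> b) \<in> sigma"
    by (rule sigma_mult_comm)
  also have "(c \<odot> b, d \<odot> b) \<in> sigma"
    using assms(2) by (rule sigma_mult_right)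
  also have "(d \<odot> b, b \<odot> d) \<in> sigma"
    by (rule sigma_mult_comm)
  finally show ?thesis .
qed

lemma dl_congruence_sigma: "dl_congruence (\<oplus>) (\<odot>) sigma"
  unfolding dl_congruence_def semiring_congruence_def
  by (simp add: sigma_equiv sigma_add sigma_mult sigma_add_comm sigma_mult_comm sigma_add_absorb)

lemma dl_congruence_absorb_leq:
  assumes \<rho>: "dl_congruence (\<oplus>) (\<odot>) \<rho>" and "a \<preceq> a \<odot> w"
  shows "(a \<odot> w, a) \<in> \<rho>"
proof -
  note \<rho>D = dl_congruenceD[OF \<rho>]
  note [trans] = \<rho>D(3)
  let ?u = "a \<odot> w"
  have "?u = ?u \<oplus> (a \<oplus> ?u)"
    using assms(2) by (simp add: leq_def add_assoc)
  also have "(?u \<oplus> (a \<oplus> ?u), ?u \<oplus> (?u \<oplus> a)) \<in> \<rho>"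
    by (rule \<rho>D(4), rule \<rho>D(1), rule \<rho>D(6))
  also have "?u \<oplus> (?u \<oplus> a) = ?u \<oplus> a"
    by (simp flip: add_assoc)
  also have "(?u \<oplus> a, a \<oplus> ?u) \<in> \<rho>"
    by (rule \<rho>D(6))
  also have "(a \<oplus> ?u, a) \<in> \<rho>"
    by (rule \<rho>D(8))
  finally show ?thesis .
qed

lemma dl_congruence_sandwich:
  assumes \<rho>: "dl_congruence (\<oplus>) (\<odot>) \<rho>"
  shows "(a \<odot> x \<odot> b \<odot> x \<odot> a, x \<odot> a \<odot> b) \<in> \<rho>"
proof -
  note \<rho>D = dl_congruenceD[OF \<rho>]
  note [trans] = \<rho>D(3)
  have "a \<odot> x \<odot> b \<odot> x \<odot> a = (a \<odot> x \<odot> b) \<odot> (x \<odot> a)"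
    by (simp add: mult_assoc)
  also have "((a \<odot> x \<odot> b) \<odot> (x \<odot> a), (x \<odot> a) \<odot> (a \<odot> x \<odot> b)) \<in> \<rho>"
    by (rule \<rho>D(7))
  also have "(x \<odot> a) \<odot> (a \<odot> x \<odot> b) = x \<odot> (a \<odot> x) \<odot> b"
    by (simp add: band_simps)
  also have "(x \<odot> (a \<odot> x) \<odot> b, x \<odot> (x \<odot> a) \<odot> b) \<in> \<rho>"
    by (rule \<rho>D(5), rule \<rho>D(5), rule \<rho>D(1), rule \<rho>D(7), rule \<rho>D(1))
  also have "x \<odot> (x \<odot> a) \<odot> b = x \<odot> a \<odot> b"
    by (simp add: band_simps)
  finally show ?thesis .
qed

lemma sigma_subset_dl_congruence:
  assumes \<rho>: "dl_congruence (\<oplus>) (\<odot>) \<rho>"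
  shows "sigma \<subseteq> \<rho>"
proof (rule subrelI)
  fix a b assume "(a, b) \<in> sigma"
  then obtain x where ab: "a \<preceq> a \<odot> (x \<odot> b \<odot> x \<odot> a)" and ba: "b \<preceq> b \<odot> (x \<odot> a \<odot> x \<odot> b)"
    by (auto simp: sigma_iff mult_assoc)
  note \<rho>D = dl_congruenceD[OF \<rho>]
  note [trans] = \<rho>D(3)
  have "(a, a \<odot> x \<odot> b \<odot> x \<odot> a) \<in> \<rho>"
    using dl_congruence_absorb_leq[OF \<rho> ab] by (simp add: mult_assoc \<rho>D(2))
  also have "(a \<odot> x \<odot> b \<odot> x \<odot> a, x \<odot> a \<odot> b) \<in> \<rho>"
    by (rule dl_congruence_sandwich[OF \<rho>])
  also have "(x \<odot> a \<odot> b, x \<odot> b \<odot> a) \<in> \<rho>"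
    unfolding mult_assoc by (rule \<rho>D(5), rule \<rho>D(1), rule \<rho>D(7))
  also have "(x \<odot> b \<odot> a, b \<odot> x \<odot> a \<odot> x \<odot> b) \<in> \<rho>"
    by (rule \<rho>D(2), rule dl_congruence_sandwich[OF \<rho>])
  also have "(b \<odot> x \<odot> a \<odot> x \<odot> b, b) \<in> \<rho>"
    using dl_congruence_absorb_leq[OF \<rho> ba] by (simp add: mult_assoc)
  finally show "(a, b) \<in> \<rho>" .
qed

end

theorem theorem2p3:
  fixes pl ml :: "'a \<Rightarrow> 'a \<Rightarrow> 'a"
  assumes "idem_semiring pl ml"
  shows "dl_congruence pl ml (sigma_star pl ml) \<and>
         (\<forall>\<rho>. dl_congruence pl ml \<rho> \<longrightarrow> sigma_star pl ml \<subseteq> \<rho>)"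
proof -
  interpret idempotent_semiring pl ml
    using assms by (rule idempotent_semiringI)
  show ?thesis
    using dl_congruence_sigma sigma_subset_dl_congruence by blast
qed

end
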